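(* There is no left commutative T2R semigroup, i.e. no T2R semigroup satisfies the identity $xya=yxa$ for all $x,y,a$.
   Context: A semigroup $S$ is a $\Delta$-semigroup if the lattice of all congruences of $S$ is a chain with respect to inclusion. A semigroup $N$ with zero $0$ is nil if every element has some power equal to $0$; non-trivial means having more than one element. A T2R semigroup is a $\Delta$-semigroup $S$ which is the disjoint union of a non-trivial nil ideal $S_0$ (with zero $0$, which is then the zero of $S$) and a subsemigroup $S_1=\{u,v\}$, $u\neq v$, which is a right zero semigroup ($xy=y$ for $x,y\in S_1$). *)

theory Defs
  imports Main
begin

definition semigroup_on :: "'a set \<Rightarrow> ('a \<Rightarrow> 'a \<Rightarrow> 'a) \<Rightarrow> bool" where
  "semigroup_on S f \<longleftrightarrow>
     (\<forall>x\<in>S. \<forall>y\<in>S. f x y \<in> S) \<and>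
     (\<forall>x\<in>S. \<forall>y\<in>S. \<forall>z\<in>S. f (f x y) z = f x (f y z))"

definition congruence_on :: "'a set \<Rightarrow> ('a \<Rightarrow> 'a \<Rightarrow> 'a) \<Rightarrow> 'a rel \<Rightarrow> bool" where
  "congruence_on S f R \<longleftrightarrow>
     equiv S R \<and>
     (\<forall>a b c. (a, b) \<in> R \<longrightarrow> c \<in> S \<longrightarrow> (f c a, f c b) \<in> R \<and> (f a c, f b c) \<in> R)"

definition delta_semigroup :: "'a set \<Rightarrow> ('a \<Rightarrow> 'a \<Rightarrow> 'a) \<Rightarrow> bool" where
  "delta_semigroup S f \<longleftrightarrow>
     semigroup_on S f \<and>
     (\<forall>R1 R2. congruence_on S f R1 \<longrightarrow> congruence_on S f R2 \<longrightarrow> R1 \<subseteq> R2 \<or> R2 \<subseteq> R1)"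

text \<open>Positive powers: spow f x n = x^(n+1).\<close>

primrec spow :: "('a \<Rightarrow> 'a \<Rightarrow> 'a) \<Rightarrow> 'a \<Rightarrow> nat \<Rightarrow> 'a" where
  "spow f x 0 = x"
| "spow f x (Suc n) = f (spow f x n) x"

definition nontrivial_nil_ideal :: "'a set \<Rightarrow> ('a \<Rightarrow> 'a \<Rightarrow> 'a) \<Rightarrow> 'a set \<Rightarrow> 'a \<Rightarrow> bool" where
  "nontrivial_nil_ideal S f N z \<longleftrightarrow>
     N \<subseteq> S \<and>
     (\<forall>x\<in>S. \<forall>y\<in>N. f x y \<in> N \<and> f y x \<in> N) \<and>
     z \<in> N \<and> (\<forall>x\<in>N. f z x = z \<and> f x z = z) \<and>
     (\<forall>x\<in>N. \<exists>n. spow f x n = z) \<and>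
     (\<exists>a\<in>N. \<exists>b\<in>N. a \<noteq> b)"

definition T2R :: "'a set \<Rightarrow> ('a \<Rightarrow> 'a \<Rightarrow> 'a) \<Rightarrow> bool" where
  "T2R S f \<longleftrightarrow>
     delta_semigroup S f \<and>
     (\<exists>N z u v. nontrivial_nil_ideal S f N z \<and>
        u \<noteq> v \<and> S = N \<union> {u, v} \<and> u \<notin> N \<and> v \<notin> N \<and>
        f u u = u \<and> f u v = v \<and> f v u = u \<and> f v v = v)"

end

theory Submission
  imports Defs
begin

text \<open>Left commutativity makes the idempotents u and v act identically from the left, so
(u, v) separates the congruence identifying elements with equal left actions from the Rees
congruence of N. As congruences form a chain, the Rees congruence lies in the former, i.e.
every element of N acts from the left as the zero. Then collapsing {u, v} is also a
congruence, and it is incomparable with the Rees congruence because N has two distinct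
elements.\<close>

definition collapse :: "'a set \<Rightarrow> 'a set \<Rightarrow> 'a rel" where
  "collapse S T = Id_on S \<union> T \<times> T"

definition left_equiv :: "'a set \<Rightarrow> ('a \<Rightarrow> 'a \<Rightarrow> 'a) \<Rightarrow> 'a rel" where
  "left_equiv S f = {(x, y). x \<in> S \<and> y \<in> S \<and> (\<forall>s\<in>S. f x s = f y s)}"

lemma congruence_on_collapse:
  assumes "T \<subseteq> S"
    and closed: "\<And>x y. x \<in> S \<Longrightarrow> y \<in> S \<Longrightarrow> f x y \<in> S"
    and left: "\<And>c t t'. c \<in> S \<Longrightarrow> t \<in> T \<Longrightarrow> t' \<in> T \<Longrightarrow>
                 f c t = f c t' \<or> f c t \<in> T \<and> f c t' \<in> T"
    and right: "\<And>c t t'. c \<in> S \<Longrightarrow> t \<in> T \<Longrightarrow> t' \<in> T \<Longrightarrow>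
                 f t c = f t' c \<or> f t c \<in> T \<and> f t' c \<in> T"
  shows "congruence_on S f (collapse S T)"
  unfolding congruence_on_def equiv_def refl_on_def sym_def trans_def
proof (intro conjI allI impI)
  fix a b c assume ab: "(a, b) \<in> collapse S T" and c: "c \<in> S"
  then consider "a = b" "a \<in> S" | "a \<in> T" "b \<in> T" "a \<in> S" "b \<in> S"
    using \<open>T \<subseteq> S\<close> unfolding collapse_def by auto
  then show "(f c a, f c b) \<in> collapse S T" and "(f a c, f b c) \<in> collapse S T"
    using left[OF c] right[OF c] closed c unfolding collapse_def by (cases; fastforce)+
qed (use \<open>T \<subseteq> S\<close> in \<open>auto simp: collapse_def\<close>)

lemma congruence_on_collapse_ideal:
  assumes "semigroup_on S f" "N \<subseteq> S" "\<forall>x\<in>S. \<forall>y\<in>N. f x y \<in> N \<and> f y x \<in> N"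
  shows "congruence_on S f (collapse S N)"
  using assms by (intro congruence_on_collapse) (auto simp: semigroup_on_def)

lemma congruence_on_left_equiv:
  assumes "semigroup_on S f"
  shows "congruence_on S f (left_equiv S f)"
  unfolding congruence_on_def equiv_def refl_on_def sym_def trans_def
proof (intro conjI allI impI)
  fix a b c assume "(a, b) \<in> left_equiv S f" and "c \<in> S"
  then show "(f c a, f c b) \<in> left_equiv S f" and "(f a c, f b c) \<in> left_equiv S f"
    using assms unfolding left_equiv_def semigroup_on_def by auto
qed (auto simp: left_equiv_def)

lemma delta_semigroup_separated_congruence_subset:
  assumes "delta_semigroup S f" "congruence_on S f R1" "congruence_on S f R2"
    and "(a, b) \<in> R1" "(a, b) \<notin> R2"
  shows "R2 \<subseteq> R1"
  using assms unfolding delta_semigroup_def by blast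

lemma nontrivial_nil_ideal_zero_left_absorbing:
  assumes "semigroup_on S f" "nontrivial_nil_ideal S f N z" "s \<in> S"
  shows "f z s = z"
proof -
  have z: "z \<in> N" "N \<subseteq> S" "f z z = z" and "f z s \<in> N"
    using assms unfolding nontrivial_nil_ideal_def by auto
  have "f z s = f (f z z) s"
    using z by simp
  also have "\<dots> = f z (f z s)"
    using assms(1,3) z unfolding semigroup_on_def by blast
  also have "\<dots> = z"
    using assms(2) \<open>f z s \<in> N\<close> unfolding nontrivial_nil_ideal_def by blast
  finally show ?thesis .
qed

lemma collapse_subset_left_equiv_left_zero:
  assumes "semigroup_on S f" "nontrivial_nil_ideal S f N z"
    and "collapse S N \<subseteq> left_equiv S f" "c \<in> N" "s \<in> S"
  shows "f c s = z"
proof -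
  have "(c, z) \<in> collapse S N"
    using assms(2,4) unfolding nontrivial_nil_ideal_def collapse_def by auto
  then have "f c s = f z s"
    using assms(3,5) unfolding left_equiv_def by auto
  then show ?thesis
    using nontrivial_nil_ideal_zero_left_absorbing[OF assms(1,2,5)] by simp
qed

lemma left_commutative_right_zero_pair_left_equiv:
  assumes "\<forall>x\<in>S. \<forall>y\<in>S. \<forall>a\<in>S. f (f x y) a = f (f y x) a"
    and "u \<in> S" "v \<in> S" "f u v = v" "f v u = u"
  shows "(u, v) \<in> left_equiv S f"
proof -
  have "f v s = f u s" if "s \<in> S" for s
    using assms(1)[rule_format, OF assms(2,3) that] assms(4,5) by simp
  then show ?thesis
    using assms(2,3) unfolding left_equiv_def by auto
qed

lemma congruence_on_collapse_right_zero_pair: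
  assumes "semigroup_on S f" "S = N \<union> {u, v}"
    and "\<And>c s. c \<in> N \<Longrightarrow> s \<in> S \<Longrightarrow> f c s = z"
    and "f u u = u" "f u v = v" "f v u = u" "f v v = v"
    and "(u, v) \<in> left_equiv S f"
  shows "congruence_on S f (collapse S {u, v})"
proof (rule congruence_on_collapse)
  fix c t t' assume c: "c \<in> S" and t: "t \<in> {u, v}" "t' \<in> {u, v}"
  have "f u c = f v c"
    using assms(8) c unfolding left_equiv_def by blast
  with t show "f t c = f t' c \<or> f t c \<in> {u, v} \<and> f t' c \<in> {u, v}"
    by auto
  from c assms(2) consider "c \<in> N" | "c = u" | "c = v"
    by blast
  then show "f c t = f c t' \<or> f c t \<in> {u, v} \<and> f c t' \<in> {u, v}"
  proof cases
    case 1
    then show ?thesis using t assms(2,3) by auto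
  qed (use t assms(4-7) in auto)
next
  show "{u, v} \<subseteq> S"
    using assms(2) by blast
next
  show "\<And>x y. x \<in> S \<Longrightarrow> y \<in> S \<Longrightarrow> f x y \<in> S"
    using assms(1) unfolding semigroup_on_def by blast
qed

theorem mainTheorem10:
  fixes S :: "'a set" and f :: "'a \<Rightarrow> 'a \<Rightarrow> 'a"
  assumes "T2R S f"
  shows "\<not> (\<forall>x\<in>S. \<forall>y\<in>S. \<forall>a\<in>S. f (f x y) a = f (f y x) a)"
proof
  assume left_comm: "\<forall>x\<in>S. \<forall>y\<in>S. \<forall>a\<in>S. f (f x y) a = f (f y x) a"
  obtain N z u v where delta: "delta_semigroup S f" and nil: "nontrivial_nil_ideal S f N z"
    and uv: "u \<noteq> v" "S = N \<union> {u, v}" "u \<notin> N" "v \<notin> N"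
      "f u u = u" "f u v = v" "f v u = u" "f v v = v"
    using assms unfolding T2R_def by blast
  have sg: "semigroup_on S f"
    using delta unfolding delta_semigroup_def by blast
  obtain a b where N: "N \<subseteq> S" "\<forall>x\<in>S. \<forall>y\<in>N. f x y \<in> N \<and> f y x \<in> N"
    and ab: "a \<in> N" "b \<in> N" "a \<noteq> b"
    using nil unfolding nontrivial_nil_ideal_def by auto
  have uv_left_equiv: "(u, v) \<in> left_equiv S f"
    using left_commutative_right_zero_pair_left_equiv[OF left_comm _ _ uv(6,7)] uv(2) by blast
  have rees: "congruence_on S f (collapse S N)"
    using congruence_on_collapse_ideal[OF sg N] .
  have "collapse S N \<subseteq> left_equiv S f"
    using delta_semigroup_separated_congruence_subset[OF delta congruence_on_left_equiv[OF sg] rees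
        uv_left_equiv] uv unfolding collapse_def by auto
  then have "congruence_on S f (collapse S {u, v})"
    using congruence_on_collapse_right_zero_pair[OF sg uv(2) _ uv(5-8) uv_left_equiv]
      collapse_subset_left_equiv_left_zero[OF sg nil] by blast
  then have "collapse S {u, v} \<subseteq> collapse S N"
    using delta_semigroup_separated_congruence_subset[OF delta rees] ab uv
    unfolding collapse_def by auto
  then show False
    using uv unfolding collapse_def by auto
qed

end
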